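(* There is no finite group that has precisely two cyclic subgroups of order $6$. *)

theory Defs
  imports "HOL-Algebra.Algebra"
begin

definition cyclic_subgroups_of_order :: "('a, 'b) monoid_scheme \<Rightarrow> nat \<Rightarrow> 'a set set" where
  "cyclic_subgroups_of_order G n =
     {H. subgroup H G \<and> (\<exists>x\<in>carrier G. H = generate G {x}) \<and> card H = n}"

end

theory Submission
  imports Defs
begin

text \<open>
  Suppose every element of order 6 lies in one of two distinct cyclic subgroups
  \<open>\<langle>a\<rangle>\<close> and \<open>\<langle>b\<rangle>\<close> of order 6. The conjugate \<open>a b a\<inverse>\<close> has order 6 and is not in
  \<open>\<langle>a\<rangle>\<close>, so it is a generator \<open>b\<^sup>\<plusminus>\<^sup>1\<close> of \<open>\<langle>b\<rangle>\<close>; hence \<open>a\<^sup>2\<close> commutes with \<open>b\<close> and \<open>a\<close>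
  with \<open>b\<^sup>3\<close>, and symmetrically. So \<open>a\<^sup>2, a\<^sup>3, b\<^sup>2, b\<^sup>3\<close>, of orders 3, 2, 3, 2, commute
  pairwise. A commuting product of elements of orders 3 and 2 has order 6, so both
  factors lie in the same one of the two subgroups. Applied to the pairs
  \<open>(a\<^sup>2, b\<^sup>3)\<close>, \<open>(b\<^sup>2, a\<^sup>3)\<close>, \<open>(a\<^sup>2b\<^sup>2, a\<^sup>3)\<close>, \<open>(a\<^sup>2, a\<^sup>3b\<^sup>3)\<close> this forces \<open>a \<in> \<langle>b\<rangle>\<close> or
  \<open>b \<in> \<langle>a\<rangle>\<close>, i.e. \<open>\<langle>a\<rangle> = \<langle>b\<rangle>\<close>.
\<close>

context group
begin

lemma nat_pow_mod_ord:
  assumes "x \<in> carrier G"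
  shows "x [^] (n mod ord x) = x [^] (n::nat)"
  by (metis assms div_mod_decomp dvd_eq_mod_eq_0 l_one mod_mult_self2_is_0
      nat_pow_closed nat_pow_mult pow_eq_id)

lemma subgroup_nat_pow_closed:
  assumes "subgroup H G" "x \<in> H"
  shows "x [^] (n::nat) \<in> H"
  using subgroup_int_pow_closed[OF assms, of "int n"] by (simp only: int_pow_int)

lemma subgroup_mult_in_iff_left:
  assumes H: "subgroup H G" and x: "x \<in> H" and y: "y \<in> carrier G"
  shows "x \<otimes> y \<in> H \<longleftrightarrow> y \<in> H"
proof
  have xc: "x \<in> carrier G"
    using subgroup.mem_carrier[OF H x] .
  assume "x \<otimes> y \<in> H"
  then have "inv x \<otimes> (x \<otimes> y) \<in> H"
    using subgroup.m_closed[OF H subgroup.m_inv_closed[OF H x]] by blast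
  then show "y \<in> H"
    using xc y by (simp add: m_assoc[symmetric])
qed (use subgroup.m_closed[OF H x] in blast)

lemma subgroup_mult_in_iff_right:
  assumes H: "subgroup H G" and y: "y \<in> H" and x: "x \<in> carrier G"
  shows "x \<otimes> y \<in> H \<longleftrightarrow> x \<in> H"
proof
  have yc: "y \<in> carrier G"
    using subgroup.mem_carrier[OF H y] .
  assume "x \<otimes> y \<in> H"
  then have "x \<otimes> y \<otimes> inv y \<in> H"
    using subgroup.m_closed[OF H _ subgroup.m_inv_closed[OF H y]] by blast
  then show "x \<in> H"
    using x yc by (simp add: m_assoc)
qed (use subgroup.m_closed[OF H _ y] in blast)

lemma subgroup_mem_if_sq_and_cube_mem:
  assumes "subgroup H G" "x \<in> carrier G" "x [^] (2::nat) \<in> H" "x [^] (3::nat) \<in> H"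
  shows "x \<in> H"
proof -
  have "x [^] (3::nat) = x [^] (2::nat) \<otimes> x"
    using nat_pow_mult[OF assms(2), of 2 1] assms(2) by simp
  then show ?thesis
    using subgroup_mult_in_iff_left[OF assms(1,3,2)] assms(4) by simp
qed

lemma mult_in_subgroup_imp_factors_in:
  assumes "subgroup H G" "u \<otimes> v \<in> H" "u \<otimes> v = v \<otimes> u" "u \<in> carrier G" "v \<in> carrier G"
    and "u [^] (3::nat) = \<one>" "v [^] (2::nat) = \<one>"
  shows "u \<in> H" "v \<in> H"
proof -
  have "u [^] (4::nat) = u"
    using nat_pow_mult[OF assms(4), of 3 1] assms(4,6) by (simp del: nat_pow_mult)
  moreover have "v [^] (4::nat) = \<one>"
    using nat_pow_mult[OF assms(5), of 2 2] assms(5,7) by (simp del: nat_pow_mult)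
  moreover have "v [^] (3::nat) = v"
    using nat_pow_mult[OF assms(5), of 2 1] assms(5,7) by (simp del: nat_pow_mult)
  ultimately have "(u \<otimes> v) [^] (4::nat) = u" "(u \<otimes> v) [^] (3::nat) = v"
    using assms(4-6) by (simp_all add: pow_mult_distrib[OF assms(3-5)])
  then show "u \<in> H" "v \<in> H"
    using subgroup_nat_pow_closed[OF assms(1,2)] by metis+
qed

lemma commutes_mult:
  assumes "x \<otimes> y = y \<otimes> x" "x \<otimes> z = z \<otimes> x"
    and "x \<in> carrier G" "y \<in> carrier G" "z \<in> carrier G"
  shows "x \<otimes> (y \<otimes> z) = (y \<otimes> z) \<otimes> x"
proof -
  have "x \<otimes> (y \<otimes> z) = y \<otimes> (x \<otimes> z)"
    using assms(1,3-5) by (simp flip: m_assoc)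
  also have "\<dots> = (y \<otimes> z) \<otimes> x"
    using assms(2-5) by (simp add: m_assoc)
  finally show ?thesis .
qed

lemma conj_nat_pow:
  assumes "a \<in> carrier G" "x \<in> carrier G"
  shows "(a \<otimes> x \<otimes> inv a) [^] (n::nat) = a \<otimes> x [^] n \<otimes> inv a"
proof (induction n)
  case (Suc n)
  have "a \<otimes> x [^] n \<otimes> inv a \<otimes> (a \<otimes> x \<otimes> inv a) = a \<otimes> (x [^] n \<otimes> x) \<otimes> inv a"
    using assms by (simp add: m_assoc[symmetric]) (simp add: m_assoc)
  then show ?case
    using Suc by simp
qed (use assms in simp)

lemma conj_eq_self_iff:
  assumes "a \<in> carrier G" "x \<in> carrier G"
  shows "a \<otimes> x \<otimes> inv a = x \<longleftrightarrow> a \<otimes> x = x \<otimes> a"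
  using assms inv_solve_right' by simp

lemma ord_conj:
  assumes "a \<in> carrier G" "x \<in> carrier G"
  shows "ord (a \<otimes> x \<otimes> inv a) = ord x"
proof -
  have "a \<otimes> y \<otimes> inv a = \<one> \<longleftrightarrow> y = \<one>" if "y \<in> carrier G" for y
    using assms that by (simp add: inv_solve_right')
  then show ?thesis
    using assms by (simp add: ord_unique conj_nat_pow pow_eq_id)
qed

lemma ord_eq_prime:
  assumes "x \<in> carrier G" "x [^] p = \<one>" "x \<noteq> \<one>" "Factorial_Ring.prime p"
  shows "ord x = p"
  using assms by (metis ord_eq_1 pow_eq_id prime_nat_iff)

lemma ord_mult_coprime:
  assumes "x \<otimes> y = y \<otimes> x" "x \<in> carrier G" "y \<in> carrier G" "coprime (ord x) (ord y)"
  shows "ord (x \<otimes> y) = ord x * ord y"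
proof (rule dvd_antisym)
  show "ord (x \<otimes> y) dvd ord x * ord y"
    using ord_mul_divides[OF assms(1-3)] .
next
  let ?d = "ord (x \<otimes> y)"
  have pow_d: "x [^] (?d * n) \<otimes> y [^] (?d * n) = \<one>" for n
  proof -
    have "x [^] (?d * n) \<otimes> y [^] (?d * n) = (x \<otimes> y) [^] (?d * n)"
      by (rule pow_mult_distrib[OF assms(1-3), symmetric])
    also have "\<dots> = \<one>"
      using assms(2,3) by (metis m_closed nat_pow_one nat_pow_pow pow_ord_eq_1)
    finally show ?thesis .
  qed
  have "x [^] (?d * ord y) = \<one>"
    using pow_d[of "ord y"] assms(2,3) by (simp add: mult.commute[of ?d] flip: nat_pow_pow)
  then have "ord x dvd ?d"
    using assms(2,4) by (simp add: pow_eq_id coprime_dvd_mult_left_iff)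
  moreover have "y [^] (?d * ord x) = \<one>"
    using pow_d[of "ord x"] assms(2,3) by (simp add: mult.commute[of ?d] flip: nat_pow_pow)
  then have "ord y dvd ?d"
    using assms(3,4) by (simp add: pow_eq_id coprime_dvd_mult_left_iff coprime_commute)
  ultimately show "ord x * ord y dvd ?d"
    using assms(4) by (rule divides_mult)
qed

lemma generate_eq_if_mem_of_same_ord:
  assumes "a \<in> carrier G" "b \<in> generate G {a}" "ord b = ord a" "ord a \<noteq> 0"
  shows "generate G {b} = generate G {a}"
proof (rule card_subset_eq)
  have b: "b \<in> carrier G"
    using assms(1,2) generate_incl by blast
  show "finite (generate G {a})"
    using assms(1,4) by (metis card.infinite generate_pow_card)
  show "generate G {b} \<subseteq> generate G {a}"
    using assms(1,2) generate_is_subgroup generate_subgroup_incl by simp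
  show "card (generate G {b}) = card (generate G {a})"
    using assms(1,3) b by (simp flip: generate_pow_card)
qed

lemma generators_of_cyclic_6:
  assumes b: "b \<in> carrier G" "ord b = 6" and c: "c \<in> generate G {b}" "ord c = 6"
  shows "c = b \<or> c = inv b"
proof -
  obtain k :: nat where k: "c = b [^] k"
    using generate_pow_nat[OF b(1)] b(2) c(1) by auto
  have "c [^] (2::nat) \<noteq> \<one>" "c [^] (3::nat) \<noteq> \<one>"
    using b(1) c(2) k by (simp_all add: pow_eq_id)
  then have "\<not> 6 dvd k * 2" "\<not> 6 dvd k * 3"
    using b k by (simp_all add: nat_pow_pow pow_eq_id)
  then have "k mod 6 = 1 \<or> k mod 6 = 5"
    by presburger
  moreover have "c = b [^] (k mod 6)"
    using nat_pow_mod_ord[OF b(1), of k] b k by simp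
  moreover have "b [^] (5::nat) = inv b"
    using b nat_pow_mult[OF b(1), of 5 1] pow_ord_eq_1[OF b(1)] by (intro inv_equality[symmetric]) simp_all
  ultimately show ?thesis
    using b(1) by auto
qed

lemma normalizing_cyclic_6_commutes:
  assumes a: "a \<in> carrier G" and b: "b \<in> carrier G" "ord b = 6"
    and normalizes: "a \<otimes> b \<otimes> inv a \<in> generate G {b}"
  shows "a [^] (2::nat) \<otimes> b = b \<otimes> a [^] (2::nat)" "a \<otimes> b [^] (3::nat) = b [^] (3::nat) \<otimes> a"
proof -
  have conj_twice: "a [^] (2::nat) \<otimes> b \<otimes> inv (a [^] (2::nat)) = a \<otimes> (a \<otimes> b \<otimes> inv a) \<otimes> inv a"
    using a b by (simp add: numeral_2_eq_2 inv_mult_group m_assoc)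
  have conj_cube: "a \<otimes> b [^] (3::nat) \<otimes> inv a = (a \<otimes> b \<otimes> inv a) [^] (3::nat)"
    using conj_nat_pow a b by simp
  have "a \<otimes> b \<otimes> inv a = b \<or> a \<otimes> b \<otimes> inv a = inv b"
    using generators_of_cyclic_6[OF b normalizes] ord_conj a b by simp
  then have "a [^] (2::nat) \<otimes> b \<otimes> inv (a [^] (2::nat)) = b \<and> a \<otimes> b [^] (3::nat) \<otimes> inv a = b [^] (3::nat)"
  proof
    assume "a \<otimes> b \<otimes> inv a = b"
    then show ?thesis
      using conj_twice conj_cube by simp
  next
    assume inverts: "a \<otimes> b \<otimes> inv a = inv b"
    have "inv (b [^] (3::nat)) = b [^] (3::nat)"
      using b nat_pow_mult[OF b(1), of 3 3] pow_ord_eq_1[OF b(1)] by (simp add: inv_equality)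
    moreover have "a \<otimes> inv b \<otimes> inv a = inv (a \<otimes> b \<otimes> inv a)"
      using a b by (simp add: inv_mult_group m_assoc)
    ultimately show ?thesis
      using conj_twice conj_cube inverts a b by (simp add: nat_pow_inv)
  qed
  then show "a [^] (2::nat) \<otimes> b = b \<otimes> a [^] (2::nat)" "a \<otimes> b [^] (3::nat) = b [^] (3::nat) \<otimes> a"
    using conj_eq_self_iff a b by simp_all
qed

lemma mutually_normalizing_cyclic_6_powers_commute:
  assumes a: "a \<in> carrier G" "ord a = 6" and b: "b \<in> carrier G" "ord b = 6"
    and "a \<otimes> b \<otimes> inv a \<in> generate G {b}" "b \<otimes> a \<otimes> inv b \<in> generate G {a}"
  shows "a [^] (2::nat) \<otimes> b [^] (2::nat) = b [^] (2::nat) \<otimes> a [^] (2::nat)"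
    "a [^] (2::nat) \<otimes> b [^] (3::nat) = b [^] (3::nat) \<otimes> a [^] (2::nat)"
    "a [^] (3::nat) \<otimes> b [^] (2::nat) = b [^] (2::nat) \<otimes> a [^] (3::nat)"
    "a [^] (3::nat) \<otimes> b [^] (3::nat) = b [^] (3::nat) \<otimes> a [^] (3::nat)"
proof -
  note ab = normalizing_cyclic_6_commutes[OF a(1) b assms(5)]
  note ba = normalizing_cyclic_6_commutes[OF b(1) a assms(6)]
  have a2: "b [^] n \<otimes> a [^] (2::nat) = a [^] (2::nat) \<otimes> b [^] n" for n :: nat
    using group_commutes_pow[OF ab(1)[symmetric] b(1) nat_pow_closed[OF a(1)]] .
  have b3: "a [^] n \<otimes> b [^] (3::nat) = b [^] (3::nat) \<otimes> a [^] n" for n :: nat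
    using group_commutes_pow[OF ab(2) a(1) nat_pow_closed[OF b(1)]] .
  have b2: "a [^] n \<otimes> b [^] (2::nat) = b [^] (2::nat) \<otimes> a [^] n" for n :: nat
    using group_commutes_pow[OF ba(1)[symmetric] a(1) nat_pow_closed[OF b(1)]] .
  show "a [^] (2::nat) \<otimes> b [^] (2::nat) = b [^] (2::nat) \<otimes> a [^] (2::nat)"
    using a2[of 2] by (rule sym)
  show "a [^] (2::nat) \<otimes> b [^] (3::nat) = b [^] (3::nat) \<otimes> a [^] (2::nat)"
    using b3[of 2] .
  show "a [^] (3::nat) \<otimes> b [^] (2::nat) = b [^] (2::nat) \<otimes> a [^] (3::nat)"
    using b2[of 3] .
  show "a [^] (3::nat) \<otimes> b [^] (3::nat) = b [^] (3::nat) \<otimes> a [^] (3::nat)"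
    using b3[of 3] .
qed

lemma conj_in_generate_if_covered:
  assumes a: "a \<in> carrier G" and b: "b \<in> carrier G" "b \<notin> generate G {a}"
    and cover: "\<And>x. x \<in> carrier G \<Longrightarrow> ord x = ord b \<Longrightarrow> x \<in> generate G {a} \<union> generate G {b}"
  shows "a \<otimes> b \<otimes> inv a \<in> generate G {b}"
proof -
  have sub: "subgroup (generate G {a}) G" and a_mem: "a \<in> generate G {a}"
    using a generate_is_subgroup generate.incl[of a "{a}" G] by simp_all
  have "a \<otimes> b \<otimes> inv a \<notin> generate G {a}"
    using subgroup_mult_in_iff_right[OF sub subgroup.m_inv_closed[OF sub a_mem]]
      subgroup_mult_in_iff_left[OF sub a_mem] a b by simp
  then show ?thesis
    using cover[of "a \<otimes> b \<otimes> inv a"] ord_conj a b by simp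
qed

lemma commuting_ord_3_2_in_common_subgroup:
  assumes "subgroup A G" "subgroup B G"
    and cover: "\<And>x. x \<in> carrier G \<Longrightarrow> ord x = 6 \<Longrightarrow> x \<in> A \<union> B"
    and "u \<otimes> v = v \<otimes> u" "u \<in> carrier G" "v \<in> carrier G" "ord u = 3" "ord v = 2"
  shows "u \<in> A \<and> v \<in> A \<or> u \<in> B \<and> v \<in> B"
proof -
  have "ord (u \<otimes> v) = 6"
    using ord_mult_coprime[OF assms(4-6)] assms(7,8) by simp
  then have "u \<otimes> v \<in> A \<union> B"
    using cover assms(5,6) by simp
  moreover have "u [^] (3::nat) = \<one>" "v [^] (2::nat) = \<one>"
    using pow_ord_eq_1 assms(5-8) by metis+
  ultimately show ?thesis
    using mult_in_subgroup_imp_factors_in[OF _ _ assms(4-6)] assms(1,2) by blast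
qed

lemma commuting_product_crosses:
  assumes A: "subgroup A G" "x \<in> A" and B: "subgroup B G" "y \<in> B"
    and xy: "x \<otimes> y = y \<otimes> x" "x [^] p = \<one>" "y [^] p = \<one>" "Factorial_Ring.prime p"
    and covered: "ord (x \<otimes> y) = p \<Longrightarrow> x \<otimes> y \<in> A \<union> B"
  shows "y \<in> A \<or> x \<in> B"
proof -
  have x: "x \<in> carrier G" and y: "y \<in> carrier G"
    using subgroup.mem_carrier[OF A] subgroup.mem_carrier[OF B] .
  show ?thesis
  proof (cases "x \<otimes> y = \<one>")
    case True
    then have "y \<otimes> x = \<one>"
      unfolding xy(1) .
    then have "inv x = y"
      using inv_equality x y by blast
    then show ?thesis
      using subgroup.m_inv_closed[OF A] by blast
  next
    case False
    have "(x \<otimes> y) [^] p = \<one>"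
      using pow_mult_distrib[OF xy(1) x y] xy(2,3) y by simp
    then have "x \<otimes> y \<in> A \<union> B"
      using covered ord_eq_prime[OF m_closed[OF x y] _ False xy(4)] by simp
    then show ?thesis
      using subgroup_mult_in_iff_left[OF A y] subgroup_mult_in_iff_right[OF B x] by blast
  qed
qed

lemma covered_commuting_ord_6_pair_crosses:
  assumes A: "subgroup A G" "a \<in> A" "ord a = 6" and B: "subgroup B G" "b \<in> B" "ord b = 6"
    and cover: "\<And>x. x \<in> carrier G \<Longrightarrow> ord x = 6 \<Longrightarrow> x \<in> A \<union> B"
    and commute: "a [^] (2::nat) \<otimes> b [^] (2::nat) = b [^] (2::nat) \<otimes> a [^] (2::nat)"
      "a [^] (2::nat) \<otimes> b [^] (3::nat) = b [^] (3::nat) \<otimes> a [^] (2::nat)"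
      "a [^] (3::nat) \<otimes> b [^] (2::nat) = b [^] (2::nat) \<otimes> a [^] (3::nat)"
      "a [^] (3::nat) \<otimes> b [^] (3::nat) = b [^] (3::nat) \<otimes> a [^] (3::nat)"
  shows "a \<in> B \<or> b \<in> A"
proof -
  let ?a2 = "a [^] (2::nat)" and ?a3 = "a [^] (3::nat)" and ?b2 = "b [^] (2::nat)" and ?b3 = "b [^] (3::nat)"
  have a: "a \<in> carrier G" and b: "b \<in> carrier G"
    using subgroup.mem_carrier[OF A(1,2)] subgroup.mem_carrier[OF B(1,2)] .
  then have carrier: "?a2 \<in> carrier G" "?a3 \<in> carrier G" "?b2 \<in> carrier G" "?b3 \<in> carrier G"
    by simp_all
  have mem: "?a2 \<in> A" "?a3 \<in> A" "?b2 \<in> B" "?b3 \<in> B"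
    using subgroup_nat_pow_closed A B by blast+
  have ord: "ord ?a2 = 3" "ord ?a3 = 2" "ord ?b2 = 3" "ord ?b3 = 2"
    using ord_pow[OF a, of 2] ord_pow[OF a, of 3] ord_pow[OF b, of 2] ord_pow[OF b, of 3] A(3) B(3)
    by simp_all
  then have pow_eq_1: "?a2 [^] (3::nat) = \<one>" "?a3 [^] (2::nat) = \<one>" "?b2 [^] (3::nat) = \<one>" "?b3 [^] (2::nat) = \<one>"
    using pow_ord_eq_1 carrier by metis+
  have prime: "Factorial_Ring.prime (2::nat)" "Factorial_Ring.prime (3::nat)"
    by simp_all
  have common: "u \<in> A \<and> v \<in> A \<or> u \<in> B \<and> v \<in> B"
    if "u \<otimes> v = v \<otimes> u" "u \<in> carrier G" "v \<in> carrier G" "ord u = 3" "ord v = 2" for u v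
    using commuting_ord_3_2_in_common_subgroup[OF A(1) B(1) _ that] cover by blast
  have "?b3 \<in> A \<or> ?a2 \<in> B"
    using common[OF commute(2) carrier(1,4) ord(1,4)] by blast
  moreover have "?b2 \<in> A \<or> ?a3 \<in> B"
    using common[OF commute(3)[symmetric] carrier(3,2) ord(3,2)] by blast
  moreover have "?b2 \<in> A \<or> ?a2 \<in> B"
  proof (rule commuting_product_crosses[OF A(1) mem(1) B(1) mem(3) commute(1) pow_eq_1(1,3) prime(2)])
    have "?a3 \<otimes> (?a2 \<otimes> ?b2) = (?a2 \<otimes> ?b2) \<otimes> ?a3"
      using commutes_mult[OF nat_pow_comm commute(3) carrier(2,1,3)] a by simp
    then show "ord (?a2 \<otimes> ?b2) = 3 \<Longrightarrow> ?a2 \<otimes> ?b2 \<in> A \<union> B"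
      using common[of "?a2 \<otimes> ?b2" ?a3] carrier ord(2) by auto
  qed
  moreover have "?b3 \<in> A \<or> ?a3 \<in> B"
  proof (rule commuting_product_crosses[OF A(1) mem(2) B(1) mem(4) commute(4) pow_eq_1(2,4) prime(1)])
    have "?a2 \<otimes> (?a3 \<otimes> ?b3) = (?a3 \<otimes> ?b3) \<otimes> ?a2"
      using commutes_mult[OF nat_pow_comm commute(2) carrier(1,2,4)] a by simp
    then show "ord (?a3 \<otimes> ?b3) = 2 \<Longrightarrow> ?a3 \<otimes> ?b3 \<in> A \<union> B"
      using common[of ?a2 "?a3 \<otimes> ?b3"] carrier ord(1) by auto
  qed
  ultimately show ?thesis
    using subgroup_mem_if_sq_and_cube_mem[OF A(1) b] subgroup_mem_if_sq_and_cube_mem[OF B(1) a]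
    by blast
qed

lemma exists_ord_6_outside_two_cyclic_subgroups:
  assumes a: "a \<in> carrier G" "ord a = 6" and b: "b \<in> carrier G" "ord b = 6"
    and distinct: "generate G {a} \<noteq> generate G {b}"
  shows "\<exists>x \<in> carrier G. ord x = 6 \<and> x \<notin> generate G {a} \<union> generate G {b}"
proof (rule ccontr)
  define A B where "A = generate G {a}" and "B = generate G {b}"
  assume "\<not> ?thesis"
  then have cover: "x \<in> A \<union> B" if "x \<in> carrier G" "ord x = 6" for x
    using that unfolding A_def B_def by blast
  have A: "subgroup A G" "a \<in> A" and B: "subgroup B G" "b \<in> B"
    using a b generate_is_subgroup generate.incl[of a "{a}" G] generate.incl[of b "{b}" G]
    unfolding A_def B_def by simp_all
  have "b \<notin> A"
    using generate_eq_if_mem_of_same_ord[OF a(1), of b] a(2) b(2) distinct A_def by auto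
  have "a \<notin> B"
    using generate_eq_if_mem_of_same_ord[OF b(1), of a] a(2) b(2) distinct B_def by auto
  have "a \<otimes> b \<otimes> inv a \<in> generate G {b}"
    using conj_in_generate_if_covered[OF a(1) b(1) \<open>b \<notin> A\<close>[unfolded A_def]] cover b(2)
    unfolding A_def B_def by simp
  moreover have "b \<otimes> a \<otimes> inv b \<in> generate G {a}"
    using conj_in_generate_if_covered[OF b(1) a(1) \<open>a \<notin> B\<close>[unfolded B_def]] cover a(2)
    unfolding A_def B_def by (simp add: Un_commute)
  ultimately have "a \<in> B \<or> b \<in> A"
    using covered_commuting_ord_6_pair_crosses[OF A a(2) B b(2) cover]
      mutually_normalizing_cyclic_6_powers_commute[OF a b] by blast
  then show False
    using \<open>a \<notin> B\<close> \<open>b \<notin> A\<close> by blast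
qed

lemma cyclic_subgroups_of_order_eq:
  "cyclic_subgroups_of_order G n = {generate G {x} | x. x \<in> carrier G \<and> ord x = n}"
proof (intro equalityI subsetI)
  fix H
  assume "H \<in> cyclic_subgroups_of_order G n"
  then obtain x where "x \<in> carrier G" "H = generate G {x}" "card H = n"
    unfolding cyclic_subgroups_of_order_def by blast
  then show "H \<in> {generate G {x} | x. x \<in> carrier G \<and> ord x = n}"
    using generate_pow_card by auto
next
  fix H
  assume "H \<in> {generate G {x} | x. x \<in> carrier G \<and> ord x = n}"
  then obtain x where "x \<in> carrier G" "ord x = n" "H = generate G {x}"
    by blast
  then show "H \<in> cyclic_subgroups_of_order G n"
    unfolding cyclic_subgroups_of_order_def using generate_is_subgroup generate_pow_card by auto
qed

end

theorem lemma3p1: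
  fixes G :: "('a, 'b) monoid_scheme"
  assumes "group G" and "finite (carrier G)"
  shows "card (cyclic_subgroups_of_order G 6) \<noteq> 2"
proof
  interpret group G by fact
  assume "card (cyclic_subgroups_of_order G 6) = 2"
  then obtain A B where only: "cyclic_subgroups_of_order G 6 = {A, B}" and "A \<noteq> B"
    by (auto simp: card_2_iff)
  moreover have "A \<in> cyclic_subgroups_of_order G 6" "B \<in> cyclic_subgroups_of_order G 6"
    using only by simp_all
  ultimately obtain a b where a: "a \<in> carrier G" "ord a = 6" and b: "b \<in> carrier G" "ord b = 6"
    and AB: "A = generate G {a}" "B = generate G {b}" "generate G {a} \<noteq> generate G {b}"
    unfolding cyclic_subgroups_of_order_eq by blast
  then obtain x where x: "x \<in> carrier G" "ord x = 6" "x \<notin> A \<union> B"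
    using exists_ord_6_outside_two_cyclic_subgroups by blast
  then have "generate G {x} \<in> {A, B}"
    unfolding only[symmetric] cyclic_subgroups_of_order_eq by blast
  moreover have "x \<in> generate G {x}"
    by (rule generate.incl) simp
  ultimately show False
    using x(3) by blast
qed

end
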